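(* Let $P\subseteq \mathbb{P}^{n-1}$ be a full-dimensional polytope, let $1\le k\le n$, and let $\mathrm{C}_P^k=(C_{G_1},\ldots,C_{G_f})$ be the vector of Chow forms of $P$, where $f$ is the number of $(n-k-1)$-dimensional faces of $P$. Then for every $V\in \mathrm{Gr}(k,n)$ the vector $\mathrm{C}_P^k(V)$ is not the zero vector, and its evaluations at different representatives of $V$ differ by a nonzero scalar multiple; hence $\mathrm{C}_P^k(V)$ is a well-defined point of $\mathbb{P}^{f-1}$.
   Context: Work over $\mathbb{R}$. $\mathrm{Gr}(k,n)$ is the Grassmannian of $k$-dimensional linear subspaces of $\mathbb{R}^n$; a linear subspace is identified with its image in $\mathbb{P}^{n-1}$, but dimensions of subspaces are always those in $\mathbb{R}^n$. A polytope $P\subseteq\mathbb{P}^{n-1}$ is the image in $\mathbb{P}^{n-1}$ of a cone $\{\sum_{i=1}^m c_iv_i : c_i\ge 0\}$ for finitely many $v_1,\ldots,v_m\in\mathbb{R}^n$ (equivalently, the projectivization of the cone over a polytope lying in an affine hyperplane not through the origin); its faces and their dimensions are those of this polytope. For $V\in\mathrm{Gr}(k,n)$ and $I\in\binom{[n]}{n-k}$, the primal Plücker coordinate $p_I(V)$ is the maximal minor on columns $I$ of an $(n-k)\times n$ matrix $N$ with $V=\ker N$ (well defined up to a common nonzero scalar). For an $(n-k)\times n$ matrix $M$, $q_I(M)$ denotes its maximal minor on columns $I$. Vector of Chow forms: fix an ordering $G_1,\ldots,G_f$ of the $(n-k-1)$-dimensional faces of $P$; for each $G_i$ choose $n-k$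 linearly independent vertices (as vectors in $\mathbb{R}^n$) $v^i_1,\ldots,v^i_{n-k}$ of $G_i$ and let $M^i$ be the $(n-k)\times n$ matrix with rows $v^i_1,\ldots,v^i_{n-k}$ in this order. The Chow form of $G_i$ is $C_{G_i}(V)=\sum_{I\in\binom{[n]}{n-k}} q_I(M^i)\,p_I(V)$; it vanishes exactly when $V$ meets the linear span of $G_i$ nontrivially. The vector of Chow forms is $\mathrm{C}_P^k=(C_{G_1},\ldots,C_{G_f})$. *)

theory Defs
  imports "HOL-Analysis.Analysis"
begin

definition det_nat :: "nat \<Rightarrow> (nat \<Rightarrow> nat \<Rightarrow> real) \<Rightarrow> real" where
  "det_nat m A = (\<Sum>p | p permutes {..<m}. of_int (sign p) * (\<Prod>i<m. A i (p i)))"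

text \<open>An m x n matrix is given by its rows R 0, ..., R (m-1) in R^n, where the column
  index type 'n (of cardinality n) carries the standard order of [n].
  maxminor m R I is the maximal minor on the columns I (card I = m), taken in increasing order.\<close>
definition maxminor :: "nat \<Rightarrow> (nat \<Rightarrow> real ^ 'n::{finite,linorder}) \<Rightarrow> 'n set \<Rightarrow> real" where
  "maxminor m R I = det_nat m (\<lambda>i j. R i $ (sorted_list_of_set I ! j))"

definition row_kernel :: "nat \<Rightarrow> (nat \<Rightarrow> real ^ 'n::finite) \<Rightarrow> (real ^ 'n) set" where
  "row_kernel m N = {x. \<forall>i<m. N i \<bullet> x = 0}"

text \<open>Chow form of a face with chosen vertex matrix M (rows M 0..M (m-1)), evaluated at the
  subspace ker N, with primal Pluecker coordinates p_I = maxminor m N I.\<close>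
definition chow_form :: "nat \<Rightarrow> (nat \<Rightarrow> real ^ 'n::{finite,linorder}) \<Rightarrow> (nat \<Rightarrow> real ^ 'n::{finite,linorder}) \<Rightarrow> real" where
  "chow_form m M N = (\<Sum>I \<in> {I. card I = m}. maxminor m M I * maxminor m N I)"

end

theory Submission
  imports Defs "Jordan_Normal_Form.Determinant"
begin

text \<open>Q spans the whole space, so one can walk down from Q through facets, each time choosing a
  facet whose span misses a nonzero vector of the part of V still inside the current span; that
  part then loses one dimension. Such a facet exists because a bounded polyhedron contains no
  ray. After k steps one reaches a face G of linear dimension n - k whose span meets V only in 0.
  By Cauchy--Binet the Chow form of G at V = ker N equals det (M N^T), which vanishes only if
  some nonzero combination of the rows of M lies in ker N. Two matrices with kernel V have the
  same row space, so N' = A N, and every Chow form gets multiplied by det A, which is nonzero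
  because some Chow form at N' is.\<close>

section \<open>Faces of a polytope avoiding a subspace\<close>

lemma affine_hull_eq_span_Int_hyperplane:
  fixes S :: "'a::euclidean_space set"
  assumes "S \<subseteq> {x. a \<bullet> x = b}" "b \<noteq> 0"
  shows "affine hull S = span S \<inter> {x. a \<bullet> x = b}"
proof
  have "affine hull S \<subseteq> {x. a \<bullet> x = b}"
    using hull_minimal[where S = affine, OF assms(1) affine_hyperplane] .
  then show "affine hull S \<subseteq> span S \<inter> {x. a \<bullet> x = b}"
    using affine_hull_subset_span by blast
next
  show "span S \<inter> {x. a \<bullet> x = b} \<subseteq> affine hull S"
  proof
    fix y assume y: "y \<in> span S \<inter> {x. a \<bullet> x = b}"
    then obtain T u where T: "finite T" "T \<subseteq> S" and y_eq: "y = (\<Sum>v\<in>T. u v *\<^sub>R v)"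
      by (auto simp: span_explicit)
    have "b = (\<Sum>v\<in>T. u v * (a \<bullet> v))"
      using y by (simp add: y_eq inner_sum_right)
    also have "\<dots> = b * sum u T"
      using T assms(1) by (auto simp: sum_distrib_left mult.commute intro!: sum.cong)
    finally have "sum u T = 1"
      using assms(2) by simp
    then show "y \<in> affine hull S"
      unfolding affine_hull_explicit using T y_eq by fastforce
  qed
qed

lemma dim_eq_aff_dim_in_affine_hyperplane:
  fixes S :: "'a::euclidean_space set"
  assumes "S \<subseteq> {x. a \<bullet> x = b}" "b \<noteq> 0"
  shows "int (dim S) = aff_dim S + 1"
proof -
  have "0 \<notin> affine hull S"
    using assms by (simp add: affine_hull_eq_span_Int_hyperplane)
  then have "aff_dim (insert 0 S) = aff_dim S + 1"
    by (simp add: aff_dim_insert)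
  moreover have "affine hull (insert 0 S) = span (insert 0 S)"
    by (rule affine_hull_span_0) (simp add: hull_inc)
  then have "aff_dim (insert 0 S) = int (dim S)"
    by (metis aff_dim_affine_hull aff_dim_subspace dim_insert dim_span span_zero subspace_span)
  ultimately show ?thesis
    by simp
qed

lemma dim_facet_of_in_affine_hyperplane:
  fixes F :: "'a::euclidean_space set"
  assumes "F' facet_of F" "F \<subseteq> {x. a \<bullet> x = b}" "b \<noteq> 0"
  shows "dim F = dim F' + 1"
proof -
  have "F' \<subseteq> {x. a \<bullet> x = b}"
    using assms(1,2) facet_of_imp_subset by blast
  then show ?thesis
    using assms dim_eq_aff_dim_in_affine_hyperplane[OF assms(2,3)]
      dim_eq_aff_dim_in_affine_hyperplane[of F' a b] by (simp add: facet_of_def)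
qed

lemma bounded_ray_eq_0:
  fixes q u :: "'a::real_normed_vector"
  assumes "bounded S" and ray: "\<And>t. t \<ge> 0 \<Longrightarrow> q + t *\<^sub>R u \<in> S"
  shows "u = 0"
proof (rule ccontr)
  assume "u \<noteq> 0"
  obtain R where R: "\<And>x. x \<in> S \<Longrightarrow> norm x \<le> R"
    using \<open>bounded S\<close> bounded_iff by blast
  have "norm q \<le> R"
    using R ray[of 0] by simp
  define t where "t = (R + norm q + 1) / norm u"
  have "R + norm q + 1 > 0"
    using \<open>norm q \<le> R\<close> norm_ge_zero[of q] by linarith
  then have "t \<ge> 0" and norm_tu: "norm (t *\<^sub>R u) = R + norm q + 1"
    using \<open>u \<noteq> 0\<close> by (auto simp: t_def)
  then have "norm (q + t *\<^sub>R u) \<le> R"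
    using R ray by blast
  moreover have "norm (t *\<^sub>R u) \<le> norm (q + t *\<^sub>R u) + norm q"
    by (metis add_diff_cancel_left' norm_triangle_ineq4)
  ultimately show False
    using norm_tu by linarith
qed

lemma halfspaces_contain_ray:
  fixes F :: "'a::euclidean_space set" and c :: "'a set \<Rightarrow> 'a"
  assumes F_eq: "F = affine hull F \<inter> \<Inter>H" and H: "\<And>h. h \<in> H \<Longrightarrow> h = {x. c h \<bullet> x \<le> d h}"
    and "q \<in> affine hull F" "q + u \<in> affine hull F"
    and ineqs: "\<And>h. h \<in> H \<Longrightarrow> c h \<bullet> q \<le> d h \<and> c h \<bullet> u \<le> 0" and "t \<ge> 0"
  shows "q + t *\<^sub>R u \<in> F"
proof -
  have "(1 - t) *\<^sub>R q + t *\<^sub>R (q + u) \<in> affine hull F"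
    using mem_affine[OF affine_affine_hull assms(3,4)] by simp
  then have "q + t *\<^sub>R u \<in> affine hull F"
    by (simp add: algebra_simps)
  moreover have "q + t *\<^sub>R u \<in> \<Inter>H"
  proof
    fix h assume "h \<in> H"
    then have "c h \<bullet> q \<le> d h" "t * (c h \<bullet> u) \<le> 0"
      using ineqs \<open>t \<ge> 0\<close> by (simp_all add: mult_nonneg_nonpos)
    then have "c h \<bullet> (q + t *\<^sub>R u) \<le> d h"
      by (simp add: inner_add_right)
    with H[OF \<open>h \<in> H\<close>] show "q + t *\<^sub>R u \<in> h"
      by blast
  qed
  ultimately show ?thesis
    using F_eq by blast
qed

lemma inner_eq_on_span_Int_hyperplanes:
  fixes S :: "'a::euclidean_space set" and c :: 'a
  assumes "S \<subseteq> {x. a \<bullet> x = b}" "b \<noteq> 0" "S \<subseteq> {x. c \<bullet> x = d}" "w \<in> span S"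
  shows "c \<bullet> w = (d / b) * (a \<bullet> w)"
proof -
  have "S \<subseteq> {x. (c - (d / b) *\<^sub>R a) \<bullet> x = 0}"
  proof
    fix x assume "x \<in> S"
    then have "a \<bullet> x = b" "c \<bullet> x = d"
      using assms(1,3) by auto
    then show "x \<in> {x. (c - (d / b) *\<^sub>R a) \<bullet> x = 0}"
      using assms(2) by (simp add: inner_diff_left)
  qed
  then have "span S \<subseteq> {x. (c - (d / b) *\<^sub>R a) \<bullet> x = 0}"
    by (intro span_minimal subspace_hyperplane)
  then show ?thesis
    using assms(4) by (auto simp: inner_diff_left)
qed

text \<open>If w lay in the span of every facet, the facet-defining inequalities would leave a ray
  inside the bounded set F: along w itself when a \<bullet> w = 0, and otherwise towards any
  point of F from the multiple of w lying on all facet hyperplanes.\<close>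
lemma facet_of_polytope_avoiding_vector:
  fixes F :: "'a::euclidean_space set"
  assumes poly: "polytope F" and hyp: "F \<subseteq> {x. a \<bullet> x = b}" "b \<noteq> 0"
    and "aff_dim F \<ge> 1" and w: "w \<in> span F" "w \<noteq> 0"
  shows "\<exists>F'. F' facet_of F \<and> w \<notin> span F'"
proof (rule ccontr)
  assume "\<nexists>F'. F' facet_of F \<and> w \<notin> span F'"
  then have in_facets: "w \<in> span F'" if "F' facet_of F" for F'
    using that by blast
  obtain H where "finite H" and F_eq: "F = affine hull F \<inter> \<Inter>H"
    and "\<forall>h \<in> H. \<exists>c d. c \<noteq> 0 \<and> h = {x. c \<bullet> x \<le> d}"
    and minimal: "\<And>H'. H' \<subset> H \<Longrightarrow> F \<subset> affine hull F \<inter> \<Inter>H'"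
    using polytope_imp_polyhedron[OF poly] unfolding polyhedron_Int_affine_minimal by blast
  then obtain c d where cd: "\<And>h. h \<in> H \<Longrightarrow> c h \<noteq> 0 \<and> h = {x. c h \<bullet> x \<le> d h}"
    by metis
  then have H_eq: "\<And>h. h \<in> H \<Longrightarrow> h = {x. c h \<bullet> x \<le> d h}"
    by blast
  have in_F: "c h \<bullet> x \<le> d h" if "h \<in> H" "x \<in> F" for h x
    using F_eq H_eq that by blast
  have no_ray: "u = 0" if "q \<in> affine hull F" "q + u \<in> affine hull F"
      and "\<And>h. h \<in> H \<Longrightarrow> c h \<bullet> q \<le> d h \<and> c h \<bullet> u \<le> 0" for q u
    using bounded_ray_eq_0[OF polytope_imp_bounded[OF poly]] halfspaces_contain_ray[OF F_eq H_eq that]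
    by blast
  have cw: "c h \<bullet> w = (d h / b) * (a \<bullet> w)" if "h \<in> H" for h
  proof (rule inner_eq_on_span_Int_hyperplanes)
    have "F \<inter> {x. c h \<bullet> x = d h} facet_of F"
      using facet_of_polyhedron_explicit[OF \<open>finite H\<close> F_eq cd minimal] that by blast
    then show "w \<in> span (F \<inter> {x. c h \<bullet> x = d h})"
      by (rule in_facets)
  qed (use hyp in \<open>auto simp: subset_iff\<close>)
  obtain x0 where x0: "x0 \<in> F"
    using \<open>aff_dim F \<ge> 1\<close> by fastforce
  then have x0_hull: "x0 \<in> affine hull F"
    by (rule hull_inc)
  show False
  proof (cases "a \<bullet> w = 0")
    case True
    have "x0 + w \<in> span F" "a \<bullet> (x0 + w) = b"
      using x0 w(1) hyp True by (auto simp: span_add span_base inner_add_right)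
    then have "x0 + w \<in> affine hull F"
      by (simp add: affine_hull_eq_span_Int_hyperplane[OF hyp])
    moreover have "c h \<bullet> x0 \<le> d h \<and> c h \<bullet> w \<le> 0" if "h \<in> H" for h
      using in_F[OF that x0] cw[OF that] True by simp
    ultimately have "w = 0"
      using no_ray[OF x0_hull] by blast
    with w(2) show False ..
  next
    case False
    define p where "p = (b / (a \<bullet> w)) *\<^sub>R w"
    have "p \<in> span F" "a \<bullet> p = b"
      using w(1) False by (simp_all add: p_def span_mul)
    then have p_hull: "p \<in> affine hull F"
      by (simp add: affine_hull_eq_span_Int_hyperplane[OF hyp])
    have "F \<noteq> {p}"
      using \<open>aff_dim F \<ge> 1\<close> by auto
    then obtain x1 where x1: "x1 \<in> F" "x1 \<noteq> p"
      using x0 by blast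
    then have "p + (x1 - p) \<in> affine hull F"
      by (simp add: hull_inc)
    moreover have "c h \<bullet> p \<le> d h \<and> c h \<bullet> (x1 - p) \<le> 0" if "h \<in> H" for h
      using cw[OF that] in_F[OF that x1(1)] False hyp(2) by (simp add: p_def inner_diff_right)
    ultimately have "x1 - p = 0"
      using no_ray[OF p_hull] by blast
    with x1(2) show False
      by simp
  qed
qed

lemma dim_Int_codim_1:
  fixes W T U :: "'a::euclidean_space set"
  assumes "subspace W" "subspace T" "subspace U" "W \<subseteq> U" "T \<subseteq> U"
    and "dim U = dim T + 1" "w \<in> W" "w \<notin> T"
  shows "dim (W \<inter> T) + 1 = dim W"
proof -
  let ?WT = "{x + y |x y. x \<in> W \<and> y \<in> T}"
  have WT_U: "?WT \<subseteq> U"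
  proof
    fix z assume "z \<in> ?WT"
    then obtain x y where "z = x + y" "x \<in> U" "y \<in> U"
      using assms(4,5) by blast
    then show "z \<in> U"
      using assms(3) by (simp add: subspace_add)
  qed
  have "dim ?WT \<le> dim T + 1"
    using dim_subset[OF WT_U] assms(6) by linarith
  moreover have "insert w T \<subseteq> ?WT"
  proof
    fix x assume "x \<in> insert w T"
    then have "x = w + 0 \<and> w \<in> W \<and> 0 \<in> T \<or> x = 0 + x \<and> 0 \<in> W \<and> x \<in> T"
      using assms(1,2,7) subspace_0 by auto
    then show "x \<in> ?WT"
      by blast
  qed
  then have "dim (insert w T) \<le> dim ?WT"
    by (rule dim_subset)
  moreover have "w \<notin> span T"
    using assms(2,8) span_eq_iff by blast
  then have "dim (insert w T) = dim T + 1"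
    by (simp add: dim_insert)
  ultimately show ?thesis
    using dim_sums_Int[OF assms(1,2)] by linarith
qed

lemma facet_of_polytope_cutting_subspace:
  fixes F W :: "'a::euclidean_space set"
  assumes "polytope F" "F \<subseteq> {x. a \<bullet> x = b}" "b \<noteq> 0"
    and "subspace W" "W \<subseteq> span F" "0 < dim W" "dim W < dim F"
  obtains F' where "F' facet_of F" "dim (W \<inter> span F') + 1 = dim W"
proof -
  have "\<not> W \<subseteq> {0}"
    using assms(6) dim_eq_0 by (metis less_irrefl)
  then obtain w where w: "w \<in> W" "w \<noteq> 0"
    by blast
  have "aff_dim F \<ge> 1"
    using dim_eq_aff_dim_in_affine_hyperplane[OF assms(2,3)] assms(6,7) by linarith
  moreover have "w \<in> span F"
    using w(1) assms(5) by blast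
  ultimately obtain F' where F': "F' facet_of F" "w \<notin> span F'"
    using facet_of_polytope_avoiding_vector[OF assms(1-3)] w(2) by blast
  have "span F' \<subseteq> span F"
    using F'(1) facet_of_imp_subset span_mono by blast
  then have "dim (W \<inter> span F') + 1 = dim W"
    using dim_Int_codim_1[of W "span F'" "span F"] assms(4,5) w(1) F'(2)
      dim_facet_of_in_affine_hyperplane[OF F'(1) assms(2,3)] by simp
  with F'(1) show thesis
    by (rule that)
qed

lemma face_of_polytope_avoiding_subspace:
  fixes F W :: "'a::euclidean_space set"
  assumes "polytope F" "F \<subseteq> {x. a \<bullet> x = b}" "b \<noteq> 0" "subspace W" "W \<subseteq> span F"
  shows "\<exists>G. G face_of F \<and> dim G = dim F - dim W \<and> W \<inter> span G \<subseteq> {0}"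
  using assms
proof (induction "dim W" arbitrary: F W)
  case 0
  then have "F face_of F"
    by (simp add: face_of_refl polytope_imp_convex)
  moreover have "W \<subseteq> {0}"
    using "0.hyps" by simp
  ultimately show ?case
    \<comment> \<open>without dim_eq_0, simp uses dim W = 0 as an equation instead of turning it into W \<subseteq> {0}\<close>
    using "0.hyps" by (intro exI[of _ F]) (auto simp del: dim_eq_0)
next
  case (Suc j)
  have "dim W \<le> dim F"
    using dim_subset[OF Suc.prems(5)] by simp
  show ?case
  proof (cases "dim W = dim F")
    case True
    then show ?thesis
      by (intro exI[of _ "{}"]) simp
  next
    case False
    then obtain F' where F': "F' facet_of F" "dim (W \<inter> span F') + 1 = dim W"
      using facet_of_polytope_cutting_subspace[OF Suc.prems] Suc.hyps(2) \<open>dim W \<le> dim F\<close>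
      by (metis le_neq_implies_less zero_less_Suc)
    then have "F' face_of F"
      by (simp add: facet_of_def)
    then have "polytope F'" "F' \<subseteq> {x. a \<bullet> x = b}"
      using Suc.prems(1,2) face_of_imp_subset face_of_polytope_polytope by blast+
    moreover have "subspace (W \<inter> span F')"
      using Suc.prems(4) by (simp add: subspace_inter)
    ultimately obtain G where G: "G face_of F'" "dim G = dim F' - j" "W \<inter> span F' \<inter> span G \<subseteq> {0}"
      using Suc.hyps(1)[of "W \<inter> span F'" F'] Suc.hyps(2) Suc.prems(3) F'(2) by auto
    have "span G \<subseteq> span F'"
      using G(1) face_of_imp_subset span_mono by blast
    then have "W \<inter> span G \<subseteq> {0}"
      using G(3) by blast
    moreover have "dim G = dim F - dim W"
      using G(2) Suc.hyps(2) F'(2) dim_facet_of_in_affine_hyperplane[OF F'(1) Suc.prems(2,3)]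
      by simp
    ultimately show ?thesis
      using face_of_trans[OF G(1) \<open>F' face_of F\<close>] by blast
  qed
qed

lemma face_of_full_polytope_avoiding_subspace:
  fixes Q V :: "'a::euclidean_space set"
  assumes "polytope Q" "Q \<subseteq> {x. a \<bullet> x = b}" "b \<noteq> 0" "aff_dim Q = int DIM('a) - 1"
    and "subspace V"
  obtains G where "G face_of Q" "aff_dim G = int DIM('a) - int (dim V) - 1" "V \<inter> span G \<subseteq> {0}"
proof -
  have "dim Q = DIM('a)"
    using dim_eq_aff_dim_in_affine_hyperplane[OF assms(2,3)] assms(4) by simp
  then have "V \<subseteq> span Q"
    using dim_eq_full[of Q] by simp
  then obtain G where G: "G face_of Q" "dim G = dim Q - dim V" "V \<inter> span G \<subseteq> {0}"
    using face_of_polytope_avoiding_subspace[OF assms(1-3,5)] by blast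
  have "G \<subseteq> {x. a \<bullet> x = b}"
    using face_of_imp_subset[OF G(1)] assms(2) by blast
  then have "int (dim G) = aff_dim G + 1"
    using assms(3) by (rule dim_eq_aff_dim_in_affine_hyperplane)
  moreover have "dim V \<le> DIM('a)"
    using dim_subset_UNIV by blast
  ultimately have "aff_dim G = int DIM('a) - int (dim V) - 1"
    using G(2) \<open>dim Q = DIM('a)\<close> by simp
  with G(1,3) show thesis
    using that by blast
qed

section \<open>Kernels and row spaces\<close>

lemma row_kernel_eq_orthogonal_comp: "row_kernel m N = (N ` {..<m})\<^sup>\<bottom>"
  by (auto simp: row_kernel_def orthogonal_comp_def Linear_Algebra.orthogonal_def)

lemma orthogonal_comp_span: "(span S)\<^sup>\<bottom> = S\<^sup>\<bottom>"
proof
  show "(span S)\<^sup>\<bottom> \<subseteq> S\<^sup>\<bottom>"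
    by (rule orthogonal_comp_anti_mono) (rule span_superset)
  show "S\<^sup>\<bottom> \<subseteq> (span S)\<^sup>\<bottom>"
    unfolding orthogonal_comp_def
    using orthogonal_to_span orthogonal_commute by blast
qed

lemma orthogonal_comp_orthogonal_comp_eq_span:
  fixes S :: "'a::euclidean_space set"
  shows "S\<^sup>\<bottom>\<^sup>\<bottom> = span S"
  by (metis orthogonal_comp_self orthogonal_comp_span subspace_span)

lemma in_span_image_lessThan_iff:
  fixes N :: "nat \<Rightarrow> 'a::real_vector"
  shows   "x \<in> span (N ` {..<m}) \<longleftrightarrow> (\<exists>c. x = (\<Sum>l<m. c l *\<^sub>R N l))"
proof (induction m arbitrary: x)
  case 0
  then show ?case
    by simp
next
  case (Suc m)
  have "x \<in> span (N ` {..<Suc m}) \<longleftrightarrow> (\<exists>k. x - k *\<^sub>R N m \<in> span (N ` {..<m}))"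
    by (simp add: lessThan_Suc span_insert)
  also have "\<dots> \<longleftrightarrow> (\<exists>k c. x = (\<Sum>l<m. c l *\<^sub>R N l) + k *\<^sub>R N m)"
    by (simp add: Suc.IH diff_eq_eq)
  also have "\<dots> \<longleftrightarrow> (\<exists>c. x = (\<Sum>l<Suc m. c l *\<^sub>R N l))"
  proof
    assume "\<exists>k c. x = (\<Sum>l<m. c l *\<^sub>R N l) + k *\<^sub>R N m"
    then obtain k c where "x = (\<Sum>l<m. c l *\<^sub>R N l) + k *\<^sub>R N m"
      by blast
    then have "x = (\<Sum>l<Suc m. (c(m := k)) l *\<^sub>R N l)"
      by simp
    then show "\<exists>c. x = (\<Sum>l<Suc m. c l *\<^sub>R N l)"
      by blast
  qed auto
  finally show ?case .
qed

lemma rows_combination_if_row_kernel_eq: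
  fixes N N' :: "nat \<Rightarrow> real ^ 'n::finite"
  assumes "row_kernel m N' = row_kernel m N"
  obtains A where "\<And>j. j < m \<Longrightarrow> N' j = (\<Sum>l<m. A j l *\<^sub>R N l)"
proof -
  have "(N' ` {..<m})\<^sup>\<bottom>\<^sup>\<bottom> = (N ` {..<m})\<^sup>\<bottom>\<^sup>\<bottom>"
    using assms by (simp add: row_kernel_eq_orthogonal_comp)
  then have "span (N' ` {..<m}) = span (N ` {..<m})"
    by (simp add: orthogonal_comp_orthogonal_comp_eq_span)
  then have "N' j \<in> span (N ` {..<m})" if "j < m" for j
    using that span_superset[of "N' ` {..<m}"] by blast
  then have "\<exists>c. N' j = (\<Sum>l<m. c l *\<^sub>R N l)" if "j < m" for j
    using that in_span_image_lessThan_iff by blast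
  then have "\<forall>j. \<exists>c. j < m \<longrightarrow> N' j = (\<Sum>l<m. c l *\<^sub>R N l)"
    by blast
  then obtain A where "\<forall>j. j < m \<longrightarrow> N' j = (\<Sum>l<m. A j l *\<^sub>R N l)"
    by (rule choice[THEN exE])
  then show thesis
    using that by blast
qed

section \<open>Determinants of matrices given by their entries\<close>

lemma det_nat_cong:
  assumes "\<And>i j. i < m \<Longrightarrow> j < m \<Longrightarrow> A i j = B i j"
  shows "det_nat m A = det_nat m B"
  unfolding det_nat_def
proof (intro sum.cong refl)
  fix p assume "p \<in> {p. p permutes {..<m}}"
  then show "of_int (sign p) * (\<Prod>i<m. A i (p i)) = of_int (sign p) * (\<Prod>i<m. B i (p i))"
    using assms permutes_in_image by (fastforce intro!: prod.cong)
qed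

lemma det_nat_eq_det: "det_nat m A = Determinant.det (Matrix.mat m m (\<lambda>(i, j). A i j))"
  unfolding det_nat_def Determinant.det_def
  by (auto simp: atLeast0LessThan permutes_in_image intro!: sum.cong prod.cong)

lemma det_nat_identical_rows:
  assumes "i < m" "j < m" "i \<noteq> j" "\<And>c. c < m \<Longrightarrow> A i c = A j c"
  shows "det_nat m A = 0"
  unfolding det_nat_eq_det
  by (rule det_identical_rows[of _ m, OF _ assms(3,1,2)]) (auto intro: eq_vecI simp: assms)

lemma det_nat_permute_rows:
  assumes p: "p permutes {..<m}"
  shows "det_nat m (\<lambda>i j. A (p i) j) = of_int (sign p) * det_nat m A"
proof -
  have "Matrix.mat m m (\<lambda>(i, j). A (p i) j)
      = Matrix.mat m m (\<lambda>(i, j). Matrix.mat m m (\<lambda>(i, j). A i j) $$ (p i, j))"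
    using permutes_in_image[OF p] by (intro eq_matI) auto
  moreover have "p permutes {0..<m}"
    using p by (simp add: atLeast0LessThan)
  ultimately show ?thesis
    unfolding det_nat_eq_det using det_permute_rows[of "Matrix.mat m m (\<lambda>(i, j). A i j)" m p]
    by simp
qed

lemma det_nat_transpose: "det_nat m (\<lambda>i j. A j i) = det_nat m A"
proof -
  have "Matrix.mat m m (\<lambda>(i, j). A j i) = transpose_mat (Matrix.mat m m (\<lambda>(i, j). A i j))"
    by (intro eq_matI) auto
  then show ?thesis
    unfolding det_nat_eq_det using det_transpose[of "Matrix.mat m m (\<lambda>(i, j). A i j)" m]
    by simp
qed

lemma det_nat_mult: "det_nat m (\<lambda>i j. \<Sum>l<m. A i l * B l j) = det_nat m A * det_nat m B"
proof -
  have "Matrix.mat m m (\<lambda>(i, j). \<Sum>l<m. A i l * B l j)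
      = Matrix.mat m m (\<lambda>(i, j). A i j) * Matrix.mat m m (\<lambda>(i, j). B i j)"
    by (intro eq_matI) (auto simp: scalar_prod_def atLeast0LessThan intro!: sum.cong)
  then show ?thesis
    unfolding det_nat_eq_det by (simp add: det_mult[of _ m])
qed

lemma det_nat_eq_0_imp_left_kernel:
  assumes "det_nat m A = 0"
  obtains v where "\<exists>i<m. v i \<noteq> 0" "\<And>j. j < m \<Longrightarrow> (\<Sum>i<m. v i * A i j) = 0"
proof -
  let ?B = "Matrix.mat m m (\<lambda>(i, j). A j i)"
  have "Determinant.det ?B = 0"
    using assms det_nat_transpose[of m A] by (simp add: det_nat_eq_det)
  then obtain w where w: "w \<in> carrier_vec m" "w \<noteq> 0\<^sub>v m" "?B *\<^sub>v w = 0\<^sub>v m"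
    using det_0_iff_vec_prod_zero_field[of ?B m] by auto
  have "\<exists>i<m. w $ i \<noteq> 0"
    using w(1,2) by (metis carrier_vecD eq_vecI index_zero_vec)
  moreover have "(\<Sum>i<m. w $ i * A i j) = 0" if "j < m" for j
  proof -
    have "(?B *\<^sub>v w) $ j = 0"
      using w(3) that by simp
    then show ?thesis
      using that w(1) by (simp add: scalar_prod_def atLeast0LessThan mult.commute)
  qed
  ultimately show thesis
    using that[of "\<lambda>i. w $ i"] by blast
qed

section \<open>Cauchy--Binet and Chow forms\<close>

lemma bij_betw_nth_sorted_list_of_set:
  fixes I :: "'a::linorder set"
  assumes "finite I"
  shows "bij_betw ((!) (sorted_list_of_set I)) {..<card I} I"
  using assms by (intro bij_betw_nth) auto

lemma bij_betw_sorted_nth_permuted: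
  fixes I :: "'a::linorder set"
  assumes "finite I" "card I = m" "p permutes {..<m}"
  shows "bij_betw (\<lambda>i. sorted_list_of_set I ! p i) {..<m} I"
  using bij_betw_trans[OF permutes_imp_bij[OF assms(3)]
      bij_betw_nth_sorted_list_of_set[OF assms(1), unfolded assms(2)]]
  by (simp add: o_def)

lemma injection_eq_sorted_nth_permuted:
  fixes f :: "nat \<Rightarrow> 'a::linorder"
  assumes "inj_on f {..<m}"
  defines "p \<equiv> \<lambda>i. if i < m then the_inv_into {..<m} ((!) (sorted_list_of_set (f ` {..<m}))) (f i) else i"
  shows "p permutes {..<m}" and "\<And>i. i < m \<Longrightarrow> sorted_list_of_set (f ` {..<m}) ! p i = f i"
proof -
  let ?s = "sorted_list_of_set (f ` {..<m})"
  have nth_bij: "bij_betw ((!) ?s) {..<m} (f ` {..<m})"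
    using bij_betw_nth_sorted_list_of_set[of "f ` {..<m}"] card_image[OF assms(1)] by simp
  have "bij_betw (the_inv_into {..<m} ((!) ?s) \<circ> f) {..<m} {..<m}"
    using bij_betw_trans[OF inj_on_imp_bij_betw[OF assms(1)] bij_betw_the_inv_into[OF nth_bij]] .
  then have "bij_betw p {..<m} {..<m}"
    by (rule bij_betw_cong[THEN iffD1, rotated]) (simp add: p_def)
  then show "p permutes {..<m}"
    by (rule bij_imp_permutes) (simp add: p_def)
  show "?s ! p i = f i" if "i < m" for i
    using f_the_inv_into_f[OF bij_betw_imp_inj_on[OF nth_bij]] bij_betw_imp_surj_on[OF nth_bij] that
    by (simp add: p_def)
qed

lemma sum_injections_eq_sum_subsets_permutations:
  fixes g :: "(nat \<Rightarrow> 'n::{finite,linorder}) \<Rightarrow> 'b::comm_monoid_add"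
  shows "(\<Sum>f | f \<in> {..<m} \<rightarrow>\<^sub>E UNIV \<and> inj_on f {..<m}. g f)
       = (\<Sum>I | card I = m. \<Sum>p | p permutes {..<m}.
            g (\<lambda>i\<in>{..<m}. sorted_list_of_set I ! p i))"
proof -
  let ?s = "sorted_list_of_set :: 'n set \<Rightarrow> 'n list"
  let ?Sigma = "SIGMA I:{I :: 'n set. card I = m}. {p. p permutes {..<m}}"
  define \<iota> where "\<iota> = (\<lambda>(I, p). \<lambda>i\<in>{..<m}. ?s I ! p i)"
  define \<kappa> where "\<kappa> f = (f ` {..<m},
      \<lambda>i. if i < m then the_inv_into {..<m} ((!) (?s (f ` {..<m}))) (f i) else i)" for f
  have "(\<Sum>I | card I = m. \<Sum>p | p permutes {..<m}. g (\<iota> (I, p))) = (\<Sum>x\<in>?Sigma. g (\<iota> x))"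
    by (subst sum.Sigma) (auto simp: finite_permutations)
  also have "\<dots> = (\<Sum>f | f \<in> {..<m} \<rightarrow>\<^sub>E UNIV \<and> inj_on f {..<m}. g f)"
  proof (rule sum.reindex_bij_witness[where j = \<iota> and i = \<kappa>])
    fix x assume "x \<in> ?Sigma"
    then obtain I p where x: "x = (I, p)" and I: "card I = m" and p: "p permutes {..<m}"
      by auto
    have bij: "bij_betw (\<lambda>i. ?s I ! p i) {..<m} I"
      using bij_betw_sorted_nth_permuted[OF _ I p] by simp
    then show "\<iota> x \<in> {f. f \<in> {..<m} \<rightarrow>\<^sub>E UNIV \<and> inj_on f {..<m}}"
      by (simp add: \<iota>_def x bij_betw_def inj_on_def)
    have "the_inv_into {..<m} ((!) (?s I)) (?s I ! p i) = p i" if "i < m" for i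
      using bij_betw_nth_sorted_list_of_set[of I] I permutes_in_image[OF p] that
      by (simp add: bij_betw_def the_inv_into_f_f)
    with bij show "\<kappa> (\<iota> x) = x"
      using permutes_not_in[OF p] by (auto simp: \<kappa>_def \<iota>_def x bij_betw_def)
  next
    fix f :: "nat \<Rightarrow> 'n"
    assume "f \<in> {f. f \<in> {..<m} \<rightarrow>\<^sub>E UNIV \<and> inj_on f {..<m}}"
    then have f: "f \<in> {..<m} \<rightarrow>\<^sub>E UNIV" "inj_on f {..<m}"
      by auto
    show "\<kappa> f \<in> ?Sigma"
      using injection_eq_sorted_nth_permuted(1)[OF f(2)] card_image[OF f(2)]
      by (simp add: \<kappa>_def)
    show "\<iota> (\<kappa> f) = f"
      using injection_eq_sorted_nth_permuted(2)[OF f(2)] PiE_arb[OF f(1)]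
      by (auto simp: \<iota>_def \<kappa>_def)
  qed simp
  finally show ?thesis
    by (simp add: \<iota>_def)
qed

lemma det_nat_inner_eq_sum_injections:
  fixes M N :: "nat \<Rightarrow> real ^ 'n::{finite,linorder}"
  shows "det_nat m (\<lambda>i j. M i \<bullet> N j)
       = (\<Sum>f | f \<in> {..<m} \<rightarrow>\<^sub>E UNIV \<and> inj_on f {..<m}.
            (\<Prod>i<m. M i $ f i) * det_nat m (\<lambda>i j. N j $ f i))"
proof -
  let ?P = "{p. p permutes {..<m}}" and ?F = "{..<m} \<rightarrow>\<^sub>E (UNIV :: 'n set)"
  have "det_nat m (\<lambda>i j. M i \<bullet> N j)
      = (\<Sum>p\<in>?P. of_int (sign p) * (\<Prod>i<m. \<Sum>c\<in>UNIV. M i $ c * N (p i) $ c))"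
    unfolding det_nat_def inner_vec_def by simp
  also have "\<dots> = (\<Sum>p\<in>?P. of_int (sign p) * (\<Sum>f\<in>?F. \<Prod>i<m. M i $ f i * N (p i) $ f i))"
    by (subst prod_sum_PiE) auto
  also have "\<dots> = (\<Sum>p\<in>?P. \<Sum>f\<in>?F.
      (\<Prod>i<m. M i $ f i) * (of_int (sign p) * (\<Prod>i<m. N (p i) $ f i)))"
    by (simp add: sum_distrib_left prod.distrib mult_ac)
  also have "\<dots> = (\<Sum>f\<in>?F. \<Sum>p\<in>?P.
      (\<Prod>i<m. M i $ f i) * (of_int (sign p) * (\<Prod>i<m. N (p i) $ f i)))"
    by (rule sum.swap)
  also have "\<dots> = (\<Sum>f\<in>?F. (\<Prod>i<m. M i $ f i) * det_nat m (\<lambda>i j. N j $ f i))"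
    by (simp add: det_nat_def sum_distrib_left)
  also have "\<dots> = (\<Sum>f | f \<in> ?F \<and> inj_on f {..<m}. (\<Prod>i<m. M i $ f i) * det_nat m (\<lambda>i j. N j $ f i))"
  proof (rule sum.mono_neutral_right)
    show "\<forall>f\<in>?F - {f. f \<in> ?F \<and> inj_on f {..<m}}. (\<Prod>i<m. M i $ f i) * det_nat m (\<lambda>i j. N j $ f i) = 0"
    proof
      fix f assume "f \<in> ?F - {f. f \<in> ?F \<and> inj_on f {..<m}}"
      then obtain i j where ij: "i < m" "j < m" "i \<noteq> j" "f i = f j"
        unfolding inj_on_def by auto
      then have "det_nat m (\<lambda>i j. N j $ f i) = 0"
        by (intro det_nat_identical_rows[OF ij(1-3)]) simp
      then show "(\<Prod>i<m. M i $ f i) * det_nat m (\<lambda>i j. N j $ f i) = 0"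
        by simp
    qed
  qed (auto simp: finite_PiE)
  finally show ?thesis .
qed

lemma det_nat_sorted_columns_permuted:
  assumes "p permutes {..<m}"
  shows "det_nat m (\<lambda>i j. N j $ (sorted_list_of_set I ! p i)) = of_int (sign p) * maxminor m N I"
  using det_nat_permute_rows[OF assms, of "\<lambda>i j. N j $ (sorted_list_of_set I ! i)"]
    det_nat_transpose[of m "\<lambda>i j. N i $ (sorted_list_of_set I ! j)"]
  by (simp add: maxminor_def)

theorem cauchy_binet:
  fixes M N :: "nat \<Rightarrow> real ^ 'n::{finite,linorder}"
  shows "det_nat m (\<lambda>i j. M i \<bullet> N j) = chow_form m M N"
proof -
  let ?s = "sorted_list_of_set :: 'n set \<Rightarrow> 'n list"
  have "det_nat m (\<lambda>i j. M i \<bullet> N j)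
      = (\<Sum>I | card I = m. \<Sum>p | p permutes {..<m}.
           (\<Prod>i<m. M i $ (?s I ! p i)) * det_nat m (\<lambda>i j. N j $ (?s I ! p i)))"
    unfolding det_nat_inner_eq_sum_injections sum_injections_eq_sum_subsets_permutations
    by (intro sum.cong refl arg_cong2[where f = times] prod.cong det_nat_cong) auto
  also have "\<dots> = (\<Sum>I | card I = m. \<Sum>p | p permutes {..<m}.
           maxminor m N I * (of_int (sign p) * (\<Prod>i<m. M i $ (?s I ! p i))))"
    by (intro sum.cong refl) (simp add: det_nat_sorted_columns_permuted)
  also have "\<dots> = (\<Sum>I | card I = m. maxminor m N I * maxminor m M I)"
    by (simp add: maxminor_def det_nat_def sum_distrib_left)
  finally show ?thesis
    by (simp add: chow_form_def mult.commute)
qed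

lemma independent_image_sum_eq_0:
  assumes "inj_on M I" "independent (M ` I)" "finite I"
    and "(\<Sum>i\<in>I. c i *\<^sub>R M i) = 0" "i \<in> I"
  shows "c i = 0"
proof -
  define u where "u y = c (inv_into I M y)" for y
  have "(\<Sum>y\<in>M ` I. u y *\<^sub>R y) = 0"
    using assms(1,4) by (simp add: sum.reindex u_def)
  then have "u (M i) = 0"
    using independentD[OF assms(2) finite_imageI[OF assms(3)] subset_refl, of u] assms(5) by simp
  then show ?thesis
    using assms(1,5) by (simp add: u_def)
qed

lemma chow_form_nonzero:
  fixes M N :: "nat \<Rightarrow> real ^ 'n::{finite,linorder}"
  assumes "inj_on M {..<m}" "independent (M ` {..<m})"
    and "span (M ` {..<m}) \<inter> row_kernel m N \<subseteq> {0}"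
  shows "chow_form m M N \<noteq> 0"
proof
  assume "chow_form m M N = 0"
  then have "det_nat m (\<lambda>i j. M i \<bullet> N j) = 0"
    by (simp add: cauchy_binet)
  then obtain v where v: "\<exists>i<m. v i \<noteq> 0" "\<And>j. j < m \<Longrightarrow> (\<Sum>i<m. v i * (M i \<bullet> N j)) = 0"
    using det_nat_eq_0_imp_left_kernel by blast
  define x where "x = (\<Sum>i<m. v i *\<^sub>R M i)"
  have "x \<in> span (M ` {..<m})"
    unfolding x_def in_span_image_lessThan_iff by blast
  moreover have "x \<in> row_kernel m N"
    using v(2) by (simp add: row_kernel_def x_def inner_sum_right inner_commute)
  ultimately have "x = 0"
    using assms(3) by blast
  then have "v i = 0" if "i < m" for i
    using independent_image_sum_eq_0[OF assms(1,2) finite_lessThan, where c = v] that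
    by (simp add: x_def)
  with v(1) show False
    by blast
qed

lemma maxminor_change_of_basis:
  assumes "\<And>j. j < m \<Longrightarrow> N' j = (\<Sum>l<m. A j l *\<^sub>R N l)"
  shows "maxminor m N' I = det_nat m A * maxminor m N I"
proof -
  have "maxminor m N' I = det_nat m (\<lambda>i j. \<Sum>l<m. A i l * N l $ (sorted_list_of_set I ! j))"
    unfolding maxminor_def by (rule det_nat_cong) (simp add: assms sum_component)
  also have "\<dots> = det_nat m A * maxminor m N I"
    unfolding maxminor_def by (rule det_nat_mult)
  finally show ?thesis .
qed

lemma chow_form_change_of_basis:
  assumes "\<And>j. j < m \<Longrightarrow> N' j = (\<Sum>l<m. A j l *\<^sub>R N l)"
  shows "chow_form m M N' = det_nat m A * chow_form m M N"
  using maxminor_change_of_basis[OF assms]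
  by (simp add: chow_form_def sum_distrib_left mult_ac)

lemma chow_forms_proportional_if_row_kernel_eq:
  assumes "row_kernel m N' = row_kernel m N"
  obtains c where "\<And>M. chow_form m M N' = c * chow_form m M N"
proof -
  obtain A where "\<And>j. j < m \<Longrightarrow> N' j = (\<Sum>l<m. A j l *\<^sub>R N l)"
    using rows_combination_if_row_kernel_eq[OF assms] by blast
  then show thesis
    using that chow_form_change_of_basis by blast
qed

theorem lemma2p7:
  fixes Q :: "(real ^ 'n::{finite,linorder}) set"
    and k :: nat
    and verts :: "(real ^ 'n::{finite,linorder}) set \<Rightarrow> nat \<Rightarrow> real ^ 'n::{finite,linorder}"
    and V :: "(real ^ 'n::{finite,linorder}) set"
  assumes poly: "polytope Q"
    and hyp: "\<exists>a b. b \<noteq> 0 \<and> Q \<subseteq> {x. a \<bullet> x = b}"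
    and full: "aff_dim Q = int CARD('n) - 1"
    and k1: "1 \<le> k" and kn: "k \<le> CARD('n)"
    and verts: "\<And>G. G face_of Q \<Longrightarrow> aff_dim G = int CARD('n) - int k - 1 \<Longrightarrow>
        (\<forall>i < CARD('n) - k. verts G i extreme_point_of G)
        \<and> inj_on (verts G) {..<CARD('n) - k}
        \<and> independent (verts G ` {..<CARD('n) - k})"
    and V: "subspace V" "dim V = k"
  shows "(\<forall>N. row_kernel (CARD('n) - k) N = V \<longrightarrow>
            (\<exists>G. G face_of Q \<and> aff_dim G = int CARD('n) - int k - 1 \<and>
                 chow_form (CARD('n) - k) (verts G) N \<noteq> 0))
       \<and> (\<forall>N N'. row_kernel (CARD('n) - k) N = V \<longrightarrow> row_kernel (CARD('n) - k) N' = V \<longrightarrow>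
            (\<exists>c::real. c \<noteq> 0 \<and>
               (\<forall>G. G face_of Q \<and> aff_dim G = int CARD('n) - int k - 1 \<longrightarrow>
                  chow_form (CARD('n) - k) (verts G) N' = c * chow_form (CARD('n) - k) (verts G) N)))"
proof -
  let ?m = "CARD('n) - k"
  obtain a b where b: "b \<noteq> 0" and Q_hyp: "Q \<subseteq> {x. a \<bullet> x = b}"
    using hyp by blast
  have nonzero: "\<exists>G. G face_of Q \<and> aff_dim G = int CARD('n) - int k - 1 \<and>
      chow_form ?m (verts G) N \<noteq> 0" if N: "row_kernel ?m N = V" for N
  proof -
    obtain G where G: "G face_of Q" "aff_dim G = int CARD('n) - int k - 1" "V \<inter> span G \<subseteq> {0}"
      using face_of_full_polytope_avoiding_subspace[OF poly Q_hyp b _ V(1)] full V(2) by auto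
    then have vG: "(\<forall>i < ?m. verts G i extreme_point_of G) \<and> inj_on (verts G) {..<?m}
        \<and> independent (verts G ` {..<?m})"
      using verts by blast
    then have "span (verts G ` {..<?m}) \<subseteq> span G"
      by (intro span_mono) (auto simp: extreme_point_of_def)
    then have "chow_form ?m (verts G) N \<noteq> 0"
      using chow_form_nonzero[of "verts G" ?m N] vG G(3) N by blast
    with G(1,2) show ?thesis
      by blast
  qed
  moreover have scaling: "\<exists>c. c \<noteq> 0 \<and> (\<forall>G. G face_of Q \<and> aff_dim G = int CARD('n) - int k - 1 \<longrightarrow>
      chow_form ?m (verts G) N' = c * chow_form ?m (verts G) N)"
    if N: "row_kernel ?m N = V" and N': "row_kernel ?m N' = V" for N N'
  proof -
    obtain c where scale: "\<And>M. chow_form ?m M N' = c * chow_form ?m M N"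
      using chow_forms_proportional_if_row_kernel_eq[of ?m N' N] N N' by metis
    obtain G where "chow_form ?m (verts G) N' \<noteq> 0"
      using nonzero[OF N'] by blast
    then have "c \<noteq> 0"
      using scale by auto
    with scale show ?thesis
      by blast
  qed
  ultimately show ?thesis
    by blast
qed

end
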